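(* Let $x\in\mathbb{R}^n$ and let $\widehat{L}=L-P_{T_z}LP_{T_x^\perp}$ be its effective lifting operator. Then (i) $\widehat{L}$ has full column rank; (ii) for every $u\in\partial\|\cdot\|_{1,2}(Lx)$ (the subdifferential of $\|\cdot\|_{1,2}$ at the point $Lx$), one has $(P_{T_z}LP_{T_x^\perp})^\top u=0$ and $L^\top u=\widehat{L}^\top u$.
   Context: Let $n,N\in\mathbb{N}$, let $G_1,\dots,G_N\subseteq\{1,\dots,n\}$ be nonempty groups, possibly overlapping, with $\bigcup_iG_i=\{1,\dots,n\}$, and weights $w_i>0$. $x_G$ is the subvector of $x$ indexed by $G$ (increasing order). Let $p=\sum_i|G_i|$, partition $\{1,\dots,p\}$ into consecutive blocks $J_i=\{\sum_{j<i}|G_j|+1,\dots,\sum_{j\le i}|G_j|\}$, and define $L\in\mathbb{R}^{p\times n}$ by $(Lx)_{J_i}=w_ix_{G_i}$. For $z\in\mathbb{R}^p$, $\|z\|_{1,2}=\sum_i\|z_{J_i}\|$ (Euclidean); $u\in\partial\|\cdot\|_{1,2}(z)$ iff $u_{J_i}=z_{J_i}/\|z_{J_i}\|$ when $z_{J_i}\ne0$ and $\|u_{J_i}\|\le1$ when $z_{J_i}=0$. For $x\in\mathbb{R}^n$: $\mathcal{I}_x=\{t:x_{G_t}\ne0\}$; $\mathcal{E}_x=\{1,\dots,n\}\setminus\bigcup_{t\notin\mathcal{I}_x}G_t$, $T_x=\{x'\in\mathbb{R}^n:\mathrm{supp}(x')\subseteq\mathcal{E}_x\}$; $\mathcal{E}_z=\bigcup_{t\in\mathcal{I}_x}J_t$,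 $T_z=\{z'\in\mathbb{R}^p:\mathrm{supp}(z')\subseteq\mathcal{E}_z\}$. $P_T$ is the orthogonal (coordinate) projection onto $T$, $T^\perp$ the orthogonal complement. *)

theory Defs
  imports "Jordan_Normal_Form.DL_Rank"
begin

text \<open>Conventions: all indices are 0-based (Jordan_Normal_Form matrices/vectors).
  Coordinates of R^n are 0..<n, groups are indexed by 0..<N, G i is a subset of {0..<n}.\<close>

definition offs :: "(nat \<Rightarrow> nat set) \<Rightarrow> nat \<Rightarrow> nat" where
  "offs G i = (\<Sum>j<i. card (G j))"

definition blk :: "(nat \<Rightarrow> nat set) \<Rightarrow> nat \<Rightarrow> nat set" where
  "blk G i = {offs G i ..< offs G i + card (G i)}"

text \<open>Lifting operator L in R^{p x n}: (L x)_{J_i} = w_i x_{G_i} (G_i listed increasingly).\<close>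
definition lift_mat :: "nat \<Rightarrow> nat \<Rightarrow> (nat \<Rightarrow> nat set) \<Rightarrow> (nat \<Rightarrow> real) \<Rightarrow> real mat" where
  "lift_mat n N G w = mat (offs G N) n (\<lambda>(k, j).
      \<Sum>i<N. (if k \<in> blk G i \<and> j = sorted_list_of_set (G i) ! (k - offs G i) then w i else 0))"

definition blk_norm :: "(nat \<Rightarrow> nat set) \<Rightarrow> real vec \<Rightarrow> nat \<Rightarrow> real" where
  "blk_norm G z i = sqrt (\<Sum>k\<in>blk G i. (z $ k)\<^sup>2)"

text \<open>Subdifferential of the l_{1,2} norm at z (as characterized in the paper).\<close>
definition subdiff12 :: "nat \<Rightarrow> (nat \<Rightarrow> nat set) \<Rightarrow> real vec \<Rightarrow> real vec set" where
  "subdiff12 N G z = {u \<in> carrier_vec (offs G N). \<forall>i<N.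
      (if (\<exists>k\<in>blk G i. z $ k \<noteq> 0)
       then (\<forall>k\<in>blk G i. u $ k = z $ k / blk_norm G z i)
       else blk_norm G u i \<le> 1)}"

definition active_grps :: "nat \<Rightarrow> (nat \<Rightarrow> nat set) \<Rightarrow> real vec \<Rightarrow> nat set" where
  "active_grps N G x = {t. t < N \<and> (\<exists>j\<in>G t. x $ j \<noteq> 0)}"

text \<open>E_x: support set of the model subspace T_x.\<close>
definition Ex_set :: "nat \<Rightarrow> nat \<Rightarrow> (nat \<Rightarrow> nat set) \<Rightarrow> real vec \<Rightarrow> nat set" where
  "Ex_set n N G x = {0..<n} - (\<Union>t\<in>{t. t < N \<and> t \<notin> active_grps N G x}. G t)"

text \<open>E_z: support set of T_z.\<close>
definition Ez_set :: "nat \<Rightarrow> (nat \<Rightarrow> nat set) \<Rightarrow> real vec \<Rightarrow> nat set" where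
  "Ez_set N G x = (\<Union>t\<in>active_grps N G x. blk G t)"

definition coord_proj :: "nat \<Rightarrow> nat set \<Rightarrow> real mat" where
  "coord_proj d E = mat d d (\<lambda>(i, j). if i = j \<and> i \<in> E then 1 else 0)"

definition full_column_rank :: "real mat \<Rightarrow> bool" where
  "full_column_rank A \<longleftrightarrow> vec_space.rank (dim_row A) A = dim_col A"

end

theory Submission
  imports Defs
begin

text \<open>Entrywise, PTz * L * PTxperp is L restricted to the rows in E_z and the columns outside
  E_x, so Lhat is L with exactly these entries deleted. A column j outside E_x lies in an
  inactive group, whose rows are not in E_z; hence every column j of Lhat keeps a row of L in
  which the weight at position j is the only nonzero entry, and Lhat has full column rank.
  A deleted nonzero entry L_kj sits in a row k of an active block with (Lx)_k = w_i x_j = 0,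
  and at a zero entry of a nonzero block every subgradient vanishes. Hence
  (PTz * L * PTxperp)^T u = 0, and L^T u = Lhat^T u follows by linearity.\<close>

lemma coord_proj_carrier: "coord_proj d E \<in> carrier_mat d d"
  by (simp add: coord_proj_def)

lemma index_coord_proj_mult:
  assumes "A \<in> carrier_mat nr nc" "k < nr" "j < nc"
  shows "(coord_proj nr E * A) $$ (k, j) = (if k \<in> E then A $$ (k, j) else 0)"
  using assms by (simp add: coord_proj_def scalar_prod_def if_distrib if_distribR sum.delta cong: if_cong)

lemma index_mult_coord_proj:
  assumes "A \<in> carrier_mat nr nc" "k < nr" "j < nc"
  shows "(A * coord_proj nc F) $$ (k, j) = (if j \<in> F then A $$ (k, j) else 0)"
proof -
  have "(A * coord_proj nc F) $$ (k, j) =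
      (\<Sum>l\<in>{0..<nc}. A $$ (k, l) * (if l = j \<and> l \<in> F then 1 else 0))"
    using assms by (simp add: coord_proj_def scalar_prod_def)
  also have "\<dots> = (\<Sum>l\<in>{0..<nc}. if l = j then (if j \<in> F then A $$ (k, j) else 0) else 0)"
    by (rule sum.cong) auto
  finally show ?thesis
    using assms(3) by simp
qed

lemma coord_proj_sandwich_carrier:
  "A \<in> carrier_mat nr nc \<Longrightarrow> coord_proj nr E * A * coord_proj nc F \<in> carrier_mat nr nc"
  by (metis coord_proj_carrier mult_carrier_mat)

lemma index_coord_proj_sandwich:
  assumes "A \<in> carrier_mat nr nc" "k < nr" "j < nc"
  shows "(coord_proj nr E * A * coord_proj nc F) $$ (k, j) =
    (if k \<in> E \<and> j \<in> F then A $$ (k, j) else 0)"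
proof -
  have "coord_proj nr E * A \<in> carrier_mat nr nc"
    using mult_carrier_mat[OF coord_proj_carrier assms(1)] .
  then show ?thesis
    using assms by (simp add: index_mult_coord_proj index_coord_proj_mult)
qed

lemma transpose_mult_vec_eq_0I:
  assumes A: "A \<in> carrier_mat nr nc" and u: "u \<in> carrier_vec nr"
    and vanish: "\<And>k j. k < nr \<Longrightarrow> j < nc \<Longrightarrow> A $$ (k, j) \<noteq> 0 \<Longrightarrow> u $ k = 0"
  shows "transpose_mat A *\<^sub>v u = 0\<^sub>v nc"
proof (rule eq_vecI)
  fix j assume "j < dim_vec (0\<^sub>v nc :: 'a vec)"
  then have "j < nc" by simp
  then have "(transpose_mat A *\<^sub>v u) $ j = (\<Sum>k<nr. A $$ (k, j) * u $ k)"
    using A u by (simp add: scalar_prod_def atLeast0LessThan)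
  also have "\<dots> = 0"
  proof (intro sum.neutral ballI)
    fix k assume "k \<in> {..<nr}"
    then show "A $$ (k, j) * u $ k = 0"
      using vanish[of k j] \<open>j < nc\<close> by (cases "A $$ (k, j) = 0") auto
  qed
  finally show "(transpose_mat A *\<^sub>v u) $ j = 0\<^sub>v nc $ j" using \<open>j < nc\<close> by simp
qed (use A in simp)

lemma mult_vec_eq_0_imp_eq_0_if_isolating_rows:
  fixes A :: "'a :: idom mat"
  assumes A: "A \<in> carrier_mat nr nc" and v: "v \<in> carrier_vec nc" and Av: "A *\<^sub>v v = 0\<^sub>v nr"
    and isolating: "\<And>j. j < nc \<Longrightarrow>
      \<exists>k<nr. A $$ (k, j) \<noteq> 0 \<and> (\<forall>j'<nc. j' \<noteq> j \<longrightarrow> A $$ (k, j') = 0)"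
  shows "v = 0\<^sub>v nc"
proof (rule eq_vecI)
  fix j assume "j < dim_vec (0\<^sub>v nc :: 'a vec)"
  then have "j < nc" by simp
  then obtain k where k: "k < nr" "A $$ (k, j) \<noteq> 0" "\<forall>j'<nc. j' \<noteq> j \<longrightarrow> A $$ (k, j') = 0"
    using isolating by blast
  have "(A *\<^sub>v v) $ k = (\<Sum>l\<in>{0..<nc}. A $$ (k, l) * v $ l)"
    using A v k by (simp add: scalar_prod_def)
  also have "\<dots> = (\<Sum>l\<in>{0..<nc}. if l = j then A $$ (k, j) * v $ j else 0)"
    by (rule sum.cong) (use k in auto)
  also have "\<dots> = A $$ (k, j) * v $ j"
    using \<open>j < nc\<close> by simp
  finally show "v $ j = 0\<^sub>v nc $ j"
    using Av k \<open>j < nc\<close> by auto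
qed (use v in simp)

lemma full_column_rank_if_isolating_rows:
  assumes A: "(A :: real mat) \<in> carrier_mat nr nc"
    and isolating: "\<And>j. j < nc \<Longrightarrow>
      \<exists>k<nr. A $$ (k, j) \<noteq> 0 \<and> (\<forall>j'<nc. j' \<noteq> j \<longrightarrow> A $$ (k, j') = 0)"
  shows "full_column_rank A"
proof -
  have distinct: "distinct (cols A)"
    unfolding distinct_conv_nth
  proof (intro allI impI)
    fix j j' assume "j < length (cols A)" "j' < length (cols A)" "j \<noteq> j'"
    moreover from this obtain k where "k < nr" "A $$ (k, j) \<noteq> 0" "A $$ (k, j') = 0"
      using A isolating by fastforce
    ultimately show "cols A ! j \<noteq> cols A ! j'"
      using A by (metis carrier_matD cols_length cols_nth index_col)
  qed
  have "module.lin_indpt class_ring (module_vec TYPE(real) nr) (set (cols A))"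
  proof
    assume "module.lin_dep class_ring (module_vec TYPE(real) nr) (set (cols A))"
    then obtain v where "v \<in> carrier_vec nc" "v \<noteq> 0\<^sub>v nc" "A *\<^sub>v v = 0\<^sub>v nr"
      using vec_space.lin_depE[OF A _ distinct] by blast
    then show False
      using mult_vec_eq_0_imp_eq_0_if_isolating_rows[OF A _ _ isolating] by blast
  qed
  then show ?thesis
    using vec_space.lin_indpt_full_rank[OF A distinct] A by (simp add: full_column_rank_def)
qed

lemma offs_Suc: "offs G (Suc i) = offs G i + card (G i)"
  by (simp add: offs_def)

lemma offs_mono: "i \<le> i' \<Longrightarrow> offs G i \<le> offs G i'"
  unfolding offs_def by (rule sum_mono2) auto

lemma blk_unique: "k \<in> blk G i \<Longrightarrow> k \<in> blk G i' \<Longrightarrow> i = i'"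
  using offs_mono[of "Suc i" i' G] offs_mono[of "Suc i'" i G]
  by (cases i i' rule: linorder_cases) (auto simp: blk_def offs_Suc)

lemma ex_blk: "k < offs G N \<Longrightarrow> \<exists>i<N. k \<in> blk G i"
proof (induction N)
  case 0
  then show ?case by (simp add: offs_def)
next
  case (Suc N)
  then show ?case
    by (cases "k < offs G N") (auto simp: blk_def offs_Suc less_Suc_eq)
qed

lemma less_offs_if_in_blk: "i < N \<Longrightarrow> k \<in> blk G i \<Longrightarrow> k < offs G N"
  using offs_mono[of "Suc i" N G] by (auto simp: blk_def offs_Suc)

lemma sorted_grp_nth_mem:
  assumes "finite (G i)" "k \<in> blk G i"
  shows "sorted_list_of_set (G i) ! (k - offs G i) \<in> G i"
proof -
  have "k - offs G i < length (sorted_list_of_set (G i))"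
    using assms by (auto simp: blk_def)
  from nth_mem[OF this] show ?thesis
    using assms(1) by simp
qed

lemma ex_blk_sorted_grp_nth_eq:
  assumes "finite (G i)" "j \<in> G i"
  shows "\<exists>k\<in>blk G i. sorted_list_of_set (G i) ! (k - offs G i) = j"
proof -
  obtain m where "m < card (G i)" "sorted_list_of_set (G i) ! m = j"
    using assms by (metis in_set_conv_nth length_sorted_list_of_set set_sorted_list_of_set)
  then show ?thesis
    by (intro bexI[of _ "offs G i + m"]) (auto simp: blk_def)
qed

lemma lift_mat_carrier: "lift_mat n N G w \<in> carrier_mat (offs G N) n"
  by (simp add: lift_mat_def)

lemma index_lift_mat:
  assumes "i < N" "k \<in> blk G i" "j < n"
  shows "lift_mat n N G w $$ (k, j) =
    (if j = sorted_list_of_set (G i) ! (k - offs G i) then w i else 0)"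
proof -
  have "lift_mat n N G w $$ (k, j) = (\<Sum>i'<N.
      if k \<in> blk G i' \<and> j = sorted_list_of_set (G i') ! (k - offs G i') then w i' else 0)"
    using assms(3) less_offs_if_in_blk[OF assms(1,2)] by (simp add: lift_mat_def)
  also have "\<dots> = (\<Sum>i'<N. if i' = i then
      (if j = sorted_list_of_set (G i) ! (k - offs G i) then w i else 0) else 0)"
    by (rule sum.cong) (use assms(2) blk_unique in auto)
  finally show ?thesis
    using assms(1) by simp
qed

lemma index_lift_mat_mult_vec:
  assumes "i < N" "k \<in> blk G i" "G i \<subseteq> {0..<n}" "x \<in> carrier_vec n"
  shows "(lift_mat n N G w *\<^sub>v x) $ k = w i * x $ (sorted_list_of_set (G i) ! (k - offs G i))"
proof -
  define j where "j = sorted_list_of_set (G i) ! (k - offs G i)"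
  have "j < n"
    using sorted_grp_nth_mem[of G i k] assms(2,3) finite_subset unfolding j_def by fastforce
  have "(lift_mat n N G w *\<^sub>v x) $ k = (\<Sum>l\<in>{0..<n}. lift_mat n N G w $$ (k, l) * x $ l)"
    using assms(4) less_offs_if_in_blk[OF assms(1,2)] lift_mat_carrier[of n N G w]
    by (simp add: scalar_prod_def)
  also have "\<dots> = (\<Sum>l\<in>{0..<n}. if l = j then w i * x $ j else 0)"
    by (rule sum.cong) (use assms(1,2) in \<open>auto simp: index_lift_mat j_def\<close>)
  also have "\<dots> = w i * x $ j"
    using \<open>j < n\<close> by simp
  finally show ?thesis
    unfolding j_def .
qed

lemma lift_mat_mult_vec_nonzero_on_active_blk:
  assumes "i \<in> active_grps N G x" "w i \<noteq> 0" "G i \<subseteq> {0..<n}" "x \<in> carrier_vec n"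
  shows "\<exists>k\<in>blk G i. (lift_mat n N G w *\<^sub>v x) $ k \<noteq> 0"
proof -
  obtain j where "i < N" "j \<in> G i" "x $ j \<noteq> 0"
    using assms(1) by (auto simp: active_grps_def)
  moreover obtain k where "k \<in> blk G i" "sorted_list_of_set (G i) ! (k - offs G i) = j"
    using ex_blk_sorted_grp_nth_eq \<open>j \<in> G i\<close> assms(3) finite_subset by (metis finite_atLeastLessThan)
  ultimately show ?thesis
    using assms index_lift_mat_mult_vec by fastforce
qed

lemma active_if_in_Ez_set: "k \<in> Ez_set N G x \<Longrightarrow> k \<in> blk G i \<Longrightarrow> i \<in> active_grps N G x"
  unfolding Ez_set_def using blk_unique by blast

lemma ex_inactive_grp_if_notin_Ex_set:
  "j < n \<Longrightarrow> j \<notin> Ex_set n N G x \<Longrightarrow> \<exists>t<N. t \<notin> active_grps N G x \<and> j \<in> G t"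
  unfolding Ex_set_def by auto

lemma index_eq_0_if_notin_Ex_set: "j < n \<Longrightarrow> j \<notin> Ex_set n N G x \<Longrightarrow> x $ j = 0"
  using ex_inactive_grp_if_notin_Ex_set by (fastforce simp: active_grps_def)

lemma subdiff12_index_eq_0:
  assumes "u \<in> subdiff12 N G z" "i < N" "k \<in> blk G i" "z $ k = 0" "\<exists>k'\<in>blk G i. z $ k' \<noteq> 0"
  shows "u $ k = 0"
  using assms by (simp add: subdiff12_def)

lemma full_column_rank_lift_mat_minus_masked:
  assumes grp_sub: "\<forall>i<N. G i \<subseteq> {0..<n}"
    and grp_cover: "(\<Union>i<N. G i) = {0..<n}"
    and w_nz: "\<forall>i<N. w i \<noteq> 0"
  defines "L \<equiv> lift_mat n N G w"
  shows "full_column_rank (L - coord_proj (offs G N) (Ez_set N G x) * L *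
    coord_proj n ({0..<n} - Ex_set n N G x))"
    (is "full_column_rank (L - ?M)")
proof -
  have L: "L \<in> carrier_mat (offs G N) n"
    unfolding L_def by (rule lift_mat_carrier)
  have M: "?M \<in> carrier_mat (offs G N) n"
    using L by (rule coord_proj_sandwich_carrier)
  have index_Lhat: "(L - ?M) $$ (k, j') =
      (if k \<in> Ez_set N G x \<and> j' \<notin> Ex_set n N G x then 0 else L $$ (k, j'))"
    if "k < offs G N" "j' < n" for k j'
  proof -
    have "(L - ?M) $$ (k, j') = L $$ (k, j') - ?M $$ (k, j')"
      using that carrier_matD[OF M] by (intro index_minus_mat(1)) simp_all
    then show ?thesis
      using that by (simp add: index_coord_proj_sandwich[OF L])
  qed
  show ?thesis
  proof (rule full_column_rank_if_isolating_rows)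
    show "L - ?M \<in> carrier_mat (offs G N) n"
      using M by (rule minus_carrier_mat)
  next
    fix j assume "j < n"
    have "\<exists>i<N. j \<in> G i \<and> (j \<notin> Ex_set n N G x \<longrightarrow> i \<notin> active_grps N G x)"
    proof (cases "j \<in> Ex_set n N G x")
      case True
      have "j \<in> (\<Union>i<N. G i)"
        using grp_cover \<open>j < n\<close> by simp
      then show ?thesis
        using True by blast
    next
      case False
      then show ?thesis
        using ex_inactive_grp_if_notin_Ex_set[OF \<open>j < n\<close>] by blast
    qed
    then obtain i where i: "i < N" "j \<in> G i" "j \<notin> Ex_set n N G x \<Longrightarrow> i \<notin> active_grps N G x"
      by blast
    then obtain k where k: "k \<in> blk G i" "sorted_list_of_set (G i) ! (k - offs G i) = j"
      using ex_blk_sorted_grp_nth_eq grp_sub finite_subset by (metis finite_atLeastLessThan)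
    have "k < offs G N"
      using less_offs_if_in_blk[OF i(1) k(1)] .
    moreover have "k \<notin> Ez_set N G x \<or> j \<in> Ex_set n N G x"
      using active_if_in_Ez_set[OF _ k(1)] i(3) by blast
    ultimately show "\<exists>k<offs G N. (L - ?M) $$ (k, j) \<noteq> 0 \<and>
        (\<forall>j'<n. j' \<noteq> j \<longrightarrow> (L - ?M) $$ (k, j') = 0)"
      using index_Lhat index_lift_mat[OF i(1) k(1)] k(2) w_nz i(1) \<open>j < n\<close>
      unfolding L_def by auto
  qed
qed

lemma subdiff12_lift_mat_vanishes_on_masked_entries:
  assumes grp_sub: "\<forall>i<N. G i \<subseteq> {0..<n}"
    and w_nz: "\<forall>i<N. w i \<noteq> 0"
    and x: "x \<in> carrier_vec n"
    and u: "u \<in> subdiff12 N G (lift_mat n N G w *\<^sub>v x)"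
    and k: "k < offs G N" "k \<in> Ez_set N G x"
    and j: "j < n" "j \<notin> Ex_set n N G x"
    and entry: "lift_mat n N G w $$ (k, j) \<noteq> 0"
  shows "u $ k = 0"
proof -
  obtain i where i: "i < N" "k \<in> blk G i"
    using ex_blk[OF k(1)] by blast
  have "j = sorted_list_of_set (G i) ! (k - offs G i)"
    using entry index_lift_mat[OF i j(1)] by (auto split: if_splits)
  then have "(lift_mat n N G w *\<^sub>v x) $ k = 0"
    using index_lift_mat_mult_vec[OF i _ x] grp_sub i(1) index_eq_0_if_notin_Ex_set[OF j] by simp
  moreover have "\<exists>k'\<in>blk G i. (lift_mat n N G w *\<^sub>v x) $ k' \<noteq> 0"
    using lift_mat_mult_vec_nonzero_on_active_blk active_if_in_Ez_set[OF k(2) i(2)]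
      w_nz grp_sub x i(1)
    by blast
  ultimately show ?thesis
    using subdiff12_index_eq_0[OF u i] by blast
qed

lemma transpose_masked_lift_mat_mult_subdiff12:
  assumes grp_sub: "\<forall>i<N. G i \<subseteq> {0..<n}"
    and w_nz: "\<forall>i<N. w i \<noteq> 0"
    and x: "x \<in> carrier_vec n"
    and u: "u \<in> subdiff12 N G (lift_mat n N G w *\<^sub>v x)"
  defines "L \<equiv> lift_mat n N G w"
  shows "transpose_mat (coord_proj (offs G N) (Ez_set N G x) * L *
    coord_proj n ({0..<n} - Ex_set n N G x)) *\<^sub>v u = 0\<^sub>v n"
proof (rule transpose_mult_vec_eq_0I)
  have L: "L \<in> carrier_mat (offs G N) n"
    unfolding L_def by (rule lift_mat_carrier)
  then show "coord_proj (offs G N) (Ez_set N G x) * L * coord_proj n ({0..<n} - Ex_set n N G x)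
      \<in> carrier_mat (offs G N) n"
    by (rule coord_proj_sandwich_carrier)
  show "u \<in> carrier_vec (offs G N)"
    using u by (simp add: subdiff12_def)
  fix k j
  assume kj: "k < offs G N" "j < n" and
    "(coord_proj (offs G N) (Ez_set N G x) * L * coord_proj n ({0..<n} - Ex_set n N G x)) $$ (k, j)
      \<noteq> 0"
  then have "k \<in> Ez_set N G x" "j \<notin> Ex_set n N G x" "L $$ (k, j) \<noteq> 0"
    by (simp_all add: index_coord_proj_sandwich[OF L] split: if_splits)
  then show "u $ k = 0"
    using subdiff12_lift_mat_vanishes_on_masked_entries[OF grp_sub w_nz x u kj(1) _ kj(2)]
    unfolding L_def by blast
qed

theorem proposition3p2:
  fixes n N :: nat and G :: "nat \<Rightarrow> nat set" and w :: "nat \<Rightarrow> real" and x :: "real vec"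
  assumes grp_ne: "\<forall>i<N. G i \<noteq> {}"
    and grp_sub: "\<forall>i<N. G i \<subseteq> {0..<n}"
    and grp_cover: "(\<Union>i<N. G i) = {0..<n}"
    and w_pos: "\<forall>i<N. w i > 0"
    and x_dim: "x \<in> carrier_vec n"
  defines "L \<equiv> lift_mat n N G w"
    and "PTz \<equiv> coord_proj (offs G N) (Ez_set N G x)"
    and "PTxperp \<equiv> coord_proj n ({0..<n} - Ex_set n N G x)"
  defines "Lhat \<equiv> L - PTz * L * PTxperp"
  shows "full_column_rank Lhat \<and>
    (\<forall>u \<in> subdiff12 N G (L *\<^sub>v x).
        transpose_mat (PTz * L * PTxperp) *\<^sub>v u = 0\<^sub>v n \<and>
        transpose_mat L *\<^sub>v u = transpose_mat Lhat *\<^sub>v u)"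
proof -
  have w_nz: "\<forall>i<N. w i \<noteq> 0"
    using w_pos by auto
  have L: "L \<in> carrier_mat (offs G N) n"
    unfolding L_def by (rule lift_mat_carrier)
  have M: "PTz * L * PTxperp \<in> carrier_mat (offs G N) n"
    unfolding PTz_def PTxperp_def using L by (rule coord_proj_sandwich_carrier)
  have M_u: "transpose_mat (PTz * L * PTxperp) *\<^sub>v u = 0\<^sub>v n"
    if "u \<in> subdiff12 N G (L *\<^sub>v x)" for u
    using transpose_masked_lift_mat_mult_subdiff12[OF grp_sub w_nz x_dim that[unfolded L_def]]
    unfolding L_def PTz_def PTxperp_def .
  have "transpose_mat L *\<^sub>v u = transpose_mat Lhat *\<^sub>v u"
    if "u \<in> subdiff12 N G (L *\<^sub>v x)" for u
  proof -
    have "u \<in> carrier_vec (offs G N)"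
      using that by (simp add: subdiff12_def)
    then show ?thesis
      using L M M_u[OF that]
      by (simp add: Lhat_def transpose_minus minus_mult_distrib_mat_vec[of _ n])
  qed
  then show ?thesis
    using M_u full_column_rank_lift_mat_minus_masked[OF grp_sub grp_cover w_nz]
    unfolding Lhat_def PTz_def PTxperp_def L_def by blast
qed

end
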